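(* Let $\mathcal X$ and $\mathcal Y$ be Banach spaces, let $A$ be a closed, densely defined linear operator from $\operatorname{dom}A\subset\mathcal X$ to $\mathcal Y$, and let $B$ be a closed, densely defined linear operator from $\operatorname{dom}B\subset\mathcal Y$ to $\mathcal X$. Assume that $\rho(AB)\neq\emptyset$ and $\rho(BA)\neq\emptyset$. Then $$\sigma(AB)\setminus\{0\}=\sigma(BA)\setminus\{0\}.$$ Moreover, for $\lambda\in\rho(AB)\setminus\{0\}$ and $\mu\in\rho(BA)$, $$(BA-\lambda)^{-1}=\lambda^{-1}\big[\overline{B(AB-\lambda)^{-1}A}-I\big]=\lambda^{-1}\big(\mu+(\lambda-\mu)B(AB-\lambda)^{-1}A\big)(BA-\mu)^{-1},$$ where the bar denotes the closure of the (densely defined, bounded) operator $B(AB-\lambda)^{-1}A$ defined on $\operatorname{dom}A$. Consequently, there exists a constant $C>0$ depending only on $A$ and $B$ such that for all $\lambda,\mu\in\rho(BA)$ with $\lambda\neq0$, $$\|(BA-\lambda)^{-1}\|\le\frac{C\,M_1(\lambda)M_2(\mu)}{|\lambda|}\Big(|\mu|+|\lambda-\mu|\,(2+|\lambda|)(2+|\mu|)\Big),$$ where $M_1(\lambda):=\max\{1,\|(AB-\lambda)^{-1}\|\}$ and $M_2(\mu):=\max\{1,\|(BA-\mu)^{-1}\|\}$.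
   Context: Products have natural domains: $\operatorname{dom}(AB)=\{y\in\operatorname{dom}B: By\in\operatorname{dom}A\}$, $\operatorname{dom}(BA)=\{x\in\operatorname{dom}A: Ax\in\operatorname{dom}B\}$. For a linear operator $S$ in a Banach space $\mathcal Z$, the resolvent set $\rho(S)$ is the set of $\lambda\in\mathbb C$ such that $S-\lambda:\operatorname{dom}S\to\mathcal Z$ is bijective with bounded inverse $(S-\lambda)^{-1}\in L(\mathcal Z)$; $\sigma(S)=\mathbb C\setminus\rho(S)$. (In particular, $\lambda\in\rho(BA)\setminus\{0\}$ implies $\lambda\in\rho(AB)$ by the first assertion, so $M_1(\lambda)$ is defined.) *)

theory Defs
  imports "HOL-Analysis.Analysis"
begin

class complex_vector = real_vector +
  fixes cscale :: "complex \<Rightarrow> 'a \<Rightarrow> 'a"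
  assumes cscale_add_right: "cscale a (x + y) = cscale a x + cscale a y"
    and cscale_add_left: "cscale (a + b) x = cscale a x + cscale b x"
    and cscale_cscale: "cscale a (cscale b x) = cscale (a * b) x"
    and cscale_one: "cscale 1 x = x"
    and scaleR_cscale: "scaleR r x = cscale (complex_of_real r) x"

class complex_normed_vector = complex_vector + real_normed_vector +
  assumes norm_cscale: "norm (cscale a x) = cmod a * norm x"

class cbanach = complex_normed_vector + complete_space

instantiation complex :: complex_vector
begin
definition cscale_complex :: "complex \<Rightarrow> complex \<Rightarrow> complex" where
  "cscale_complex a x = a * x"
instance by standard (auto simp: cscale_complex_def algebra_simps scaleR_conv_of_real)
end

instance complex :: complex_normed_vector
  by standard (simp add: cscale_complex_def norm_mult)

instance complex :: cbanach ..

section \<open>Unbounded linear operators, given by a domain D and a map f on it\<close>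

definition csubspace :: "'a::complex_vector set \<Rightarrow> bool" where
  "csubspace S \<longleftrightarrow> 0 \<in> S \<and> (\<forall>x\<in>S. \<forall>y\<in>S. x + y \<in> S) \<and> (\<forall>c. \<forall>x\<in>S. cscale c x \<in> S)"

definition lin_op :: "'a::complex_vector set \<Rightarrow> ('a \<Rightarrow> 'b::complex_vector) \<Rightarrow> bool" where
  "lin_op D f \<longleftrightarrow> csubspace D \<and> (\<forall>x\<in>D. \<forall>y\<in>D. f (x + y) = f x + f y)
      \<and> (\<forall>c. \<forall>x\<in>D. f (cscale c x) = cscale c (f x))"

definition graph :: "'a set \<Rightarrow> ('a \<Rightarrow> 'b) \<Rightarrow> ('a \<times> 'b) set" where
  "graph D f = {(x, f x) | x. x \<in> D}"

definition closed_op :: "'a::complex_normed_vector set \<Rightarrow> ('a \<Rightarrow> 'b::complex_normed_vector) \<Rightarrow> bool" where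
  "closed_op D f \<longleftrightarrow> closed (graph D f)"

definition densely_defined :: "'a::complex_normed_vector set \<Rightarrow> bool" where
  "densely_defined D \<longleftrightarrow> closure D = UNIV"

definition prod_dom :: "'b set \<Rightarrow> 'a set \<Rightarrow> ('a \<Rightarrow> 'b) \<Rightarrow> 'a set" where
  "prod_dom DA DB fB = {y \<in> DB. fB y \<in> DA}"

definition cbounded_linear :: "('a::complex_normed_vector \<Rightarrow> 'b::complex_normed_vector) \<Rightarrow> bool" where
  "cbounded_linear R \<longleftrightarrow> bounded_linear R \<and> (\<forall>c x. R (cscale c x) = cscale c (R x))"

definition resolvent_set :: "'a::complex_normed_vector set \<Rightarrow> ('a \<Rightarrow> 'a) \<Rightarrow> complex set" where
  "resolvent_set D S = {l. bij_betw (\<lambda>x. S x - cscale l x) D UNIV \<and>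
      (\<exists>R. cbounded_linear R \<and> (\<forall>z. R z \<in> D \<and> S (R z) - cscale l (R z) = z))}"

definition spectrum_op :: "'a::complex_normed_vector set \<Rightarrow> ('a \<Rightarrow> 'a) \<Rightarrow> complex set" where
  "spectrum_op D S = UNIV - resolvent_set D S"

definition resolvent :: "'a::complex_normed_vector set \<Rightarrow> ('a \<Rightarrow> 'a) \<Rightarrow> complex \<Rightarrow> 'a \<Rightarrow> 'a" where
  "resolvent D S l z = (THE x. x \<in> D \<and> S x - cscale l x = z)"

text \<open>Closure of an operator: the operator whose graph is the closure of the graph.\<close>
definition is_graph :: "('a \<times> 'b) set \<Rightarrow> bool" where
  "is_graph G \<longleftrightarrow> (\<forall>x y z. (x, y) \<in> G \<and> (x, z) \<in> G \<longrightarrow> y = z)"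

definition closable :: "'a::complex_normed_vector set \<Rightarrow> ('a \<Rightarrow> 'b::complex_normed_vector) \<Rightarrow> bool" where
  "closable D f \<longleftrightarrow> is_graph (closure (graph D f))"

definition cl_dom :: "'a::complex_normed_vector set \<Rightarrow> ('a \<Rightarrow> 'b::complex_normed_vector) \<Rightarrow> 'a set" where
  "cl_dom D f = fst ` closure (graph D f)"

definition cl_fun :: "'a::complex_normed_vector set \<Rightarrow> ('a \<Rightarrow> 'b::complex_normed_vector) \<Rightarrow> 'a \<Rightarrow> 'b" where
  "cl_fun D f x = (THE y. (x, y) \<in> closure (graph D f))"

end

theory Submission
  imports Defs
begin

(* Write S(l) = (BA - l)^{-1} and R(l) = (AB - l)^{-1}.  For u in dom A and l in rho(AB),
   the vector z = B R(l) A u - u lies in dom(BA) and satisfies (BA - l) z = l u.  This single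
   computation drives everything:
   - for l in rho(AB), l <> 0 and any m in rho(BA), the bounded operator
       T = l^{-1} (m S(m) + (l - m) B R(l) A S(m))
     is a right inverse of BA - l, and BA - l is injective, so l in rho(BA) and S(l) = T;
     by symmetry rho(BA) - {0} = rho(AB) - {0};
   - B R(l) A x = x + l S(l) x on dom A, so B R(l) A extends continuously to the whole space,
     which identifies the closure of B R(l) A on the dense set dom A;
   - the norm estimate follows from the formula for S(l), since B R(l) and A S(m) are bounded
     with norms controlled by the resolvent identity around fixed base points.
   Boundedness of B R(l) and A S(m) (closed operator after a bounded operator into its domain)
   is the closed graph theorem, proved first from the Baire category theorem. *)

instance cbanach \<subseteq> banach ..


section \<open>The closed graph theorem\<close>

(* Baire: the closures of the sublevel sets of any function cover a complete space, so one of
   them has an interior point. *)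
lemma Baire_ball_in_sublevel_closure:
  fixes T :: "'a::banach \<Rightarrow> 'b::real_normed_vector"
  obtains n x0 r where "r > 0" "ball x0 r \<subseteq> closure {x. norm (T x) \<le> real n}"
proof -
  define K where "K n = {x. norm (T x) \<le> real n}" for n :: nat
  have cover: "(\<Union>n. closure (K n)) = UNIV"
  proof -
    have "x \<in> K (nat \<lceil>norm (T x)\<rceil>)" for x
      unfolding K_def by simp
    then show ?thesis using closure_subset by blast
  qed
  have "\<exists>n. interior (closure (K n)) \<noteq> {}"
  proof (rule ccontr)
    assume "\<not> ?thesis"
    then have "\<And>S. S \<in> range (\<lambda>n. closure (K n)) \<Longrightarrow>
        closedin Met_TC.mtopology S \<and> Met_TC.mtopology interior_of S = {}"
      by auto
    then have "Met_TC.mtopology interior_of (\<Union>(range (\<lambda>n. closure (K n)))) = {}"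
      by (intro Met_TC.metric_Baire_category_alt) (use complete_UNIV in auto)
    then show False using cover by simp
  qed
  then obtain n x0 where "x0 \<in> interior (closure (K n))" by blast
  then obtain r where "r > 0" "ball x0 r \<subseteq> closure (K n)" using mem_interior by blast
  then show ?thesis using that unfolding K_def by blast
qed

(* For linear T the sublevel sets are convex and symmetric, so the ball can be moved to 0. *)
lemma linear_sublevel_closure_contains_ball:
  fixes T :: "'a::real_normed_vector \<Rightarrow> 'b::real_normed_vector"
  assumes lin: "linear T" and ball: "ball x0 r \<subseteq> closure {x. norm (T x) \<le> c}"
    and x: "norm x < r"
  shows "x \<in> closure {x. norm (T x) \<le> c}"
  unfolding closure_approachable
proof (intro allI impI)
  fix e :: real assume e: "e > 0"
  have "x0 + x \<in> closure {x. norm (T x) \<le> c}" "x0 - x \<in> closure {x. norm (T x) \<le> c}"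
    using x by (auto simp: dist_norm intro!: subsetD[OF ball])
  then obtain a b where ab: "norm (T a) \<le> c" "dist a (x0 + x) < e" "norm (T b) \<le> c" "dist b (x0 - x) < e"
    using e unfolding closure_approachable by (metis mem_Collect_eq)
  define y where "y = (1/2) *\<^sub>R (a - b)"
  have "T y = (1/2) *\<^sub>R (T a - T b)"
    unfolding y_def using lin by (simp add: linear_scale linear_diff)
  then have "norm (T y) = (1/2) * norm (T a - T b)"
    by simp
  also have "\<dots> \<le> (1/2) * (norm (T a) + norm (T b))"
    by (simp add: norm_triangle_ineq4)
  also have "\<dots> \<le> c" using ab by simp
  finally have "norm (T y) \<le> c" .
  moreover have "dist y x < e"
  proof -
    have "y - x = (1/2) *\<^sub>R ((a - (x0 + x)) - (b - (x0 - x)))"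
      unfolding y_def by (simp add: algebra_simps) (metis scaleR_add_left field_sum_of_halves scaleR_one)
    then have "norm (y - x) = (1/2) * norm ((a - (x0 + x)) - (b - (x0 - x)))"
      by (simp only: norm_scaleR)
    also have "\<dots> \<le> (1/2) * (norm (a - (x0 + x)) + norm (b - (x0 - x)))"
      by (intro mult_left_mono norm_triangle_ineq4) auto
    finally have "norm (y - x) \<le> (1/2) * (norm (a - (x0 + x)) + norm (b - (x0 - x)))" .
    then show ?thesis using ab by (simp add: dist_norm)
  qed
  ultimately show "\<exists>y\<in>{x. norm (T x) \<le> c}. dist y x < e" by blast
qed

lemma linear_almost_bounded:
  fixes T :: "'a::banach \<Rightarrow> 'b::real_normed_vector"
  assumes lin: "linear T"
  shows "\<exists>c \<ge> 0. \<forall>x e. e > 0 \<longrightarrow> (\<exists>z. norm (x - z) \<le> e \<and> norm (T z) \<le> c * norm x)"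
proof -
  obtain n x0 r where r: "r > 0" "ball x0 r \<subseteq> closure {x. norm (T x) \<le> real n}"
    by (rule Baire_ball_in_sublevel_closure)
  define c where "c = 2 * real n / r"
  have "\<exists>z. norm (x - z) \<le> e \<and> norm (T z) \<le> c * norm x" if e: "e > 0" for x e
  proof (cases "x = 0")
    case True
    then show ?thesis using e linear_0[OF lin] by (intro exI[of _ 0]) auto
  next
    case False
    define t where "t = 2 * norm x / r"
    have t: "t > 0" using False r by (simp add: t_def)
    have "norm ((1/t) *\<^sub>R x) < r" using r t False by (simp add: t_def)
    then have "(1/t) *\<^sub>R x \<in> closure {x. norm (T x) \<le> real n}"
      by (rule linear_sublevel_closure_contains_ball[OF lin r(2)])
    then obtain w where w: "norm (T w) \<le> real n" "dist w ((1/t) *\<^sub>R x) < e / t"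
      using e t unfolding closure_approachable by (metis (no_types, lifting) divide_pos_pos mem_Collect_eq)
    have "x - t *\<^sub>R w = t *\<^sub>R ((1/t) *\<^sub>R x - w)" using t by (simp add: algebra_simps)
    then have "norm (x - t *\<^sub>R w) = t * dist w ((1/t) *\<^sub>R x)"
      using t by (simp add: dist_norm norm_minus_commute)
    also have "\<dots> \<le> e" using w t by (simp add: field_simps)
    finally have "norm (x - t *\<^sub>R w) \<le> e" .
    moreover have "norm (T (t *\<^sub>R w)) \<le> c * norm x"
      using w t r lin by (simp add: linear_scale t_def c_def field_simps)
    ultimately show ?thesis by blast
  qed
  moreover have "c \<ge> 0" using r by (simp add: c_def)
  ultimately show ?thesis by auto
qed

(* Iterating the approximation on the remainders writes x as a series whose T-images are
   dominated by a geometric series. *)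
lemma almost_bounded_series:
  fixes T :: "'a::real_normed_vector \<Rightarrow> 'b::real_normed_vector"
  assumes approx: "\<And>x e. e > 0 \<Longrightarrow> \<exists>z. norm (x - z) \<le> e \<and> norm (T z) \<le> c * norm x"
    and c: "c \<ge> 0" and x: "x \<noteq> 0"
  shows "\<exists>z. (\<lambda>k. \<Sum>j<k. z j) \<longlonglongrightarrow> x \<and> (\<forall>k. norm (T (z k)) \<le> c * norm x * (1/2) ^ k)"
proof -
  define Z where "Z y e = (SOME z. norm (y - z) \<le> e \<and> norm (T z) \<le> c * norm y)" for y e
  have Z: "norm (y - Z y e) \<le> e \<and> norm (T (Z y e)) \<le> c * norm y" if "e > 0" for y e
    unfolding Z_def by (rule someI_ex) (rule approx[OF that])
  have nx: "norm x > 0" using x by simp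
  (* rest k is what remains of x after k approximation steps, approximated to accuracy
     norm x / 2^(k+1) by the next term z k *)
  define rest where "rest = rec_nat x (\<lambda>k v. v - Z v (norm x / 2 ^ Suc k))"
  define z where "z k = Z (rest k) (norm x / 2 ^ Suc k)" for k
  have rest_0: "rest 0 = x" and rest_Suc: "rest (Suc k) = rest k - z k" for k
    by (simp_all add: rest_def z_def)
  have norm_rest: "norm (rest k) \<le> norm x / 2 ^ k" for k
  proof (cases k)
    case (Suc j)
    then show ?thesis using Z[of "norm x / 2 ^ Suc j" "rest j"] nx by (simp add: rest_Suc z_def)
  qed (simp add: rest_0)
  have "norm (T (z k)) \<le> c * norm x * (1/2) ^ k" for k
  proof -
    have "norm (T (z k)) \<le> c * norm (rest k)" unfolding z_def using Z nx by simp
    also have "\<dots> \<le> c * (norm x / 2 ^ k)" using mult_left_mono[OF norm_rest c] by simp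
    finally show ?thesis by (simp add: power_one_over)
  qed
  moreover have "(\<lambda>k. \<Sum>j<k. z j) \<longlonglongrightarrow> x"
  proof -
    have partial: "(\<Sum>j<k. z j) = x - rest k" for k
      by (induction k) (simp_all add: rest_0 rest_Suc)
    have "rest \<longlonglongrightarrow> 0"
    proof (rule tendsto_norm_zero_cancel, rule Lim_null_comparison)
      show "\<forall>\<^sub>F k in sequentially. norm (norm (rest k)) \<le> norm x * (1/2) ^ k"
        using norm_rest by (simp add: power_one_over)
      show "(\<lambda>k. norm x * (1/2) ^ k) \<longlonglongrightarrow> 0"
        by (intro tendsto_mult_right_zero LIMSEQ_power_zero) simp
    qed
    from tendsto_diff[OF tendsto_const this, of x] show ?thesis unfolding partial by simp
  qed
  ultimately show ?thesis by auto
qed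

(* Summing the series and using the closed graph gives the bound norm (T x) <= 2c norm x. *)
lemma almost_bounded_closed_graph_bound:
  fixes T :: "'a::real_normed_vector \<Rightarrow> 'b::banach"
  assumes lin: "linear T" and cl: "closed (range (\<lambda>x. (x, T x)))"
    and approx: "\<And>x e. e > 0 \<Longrightarrow> \<exists>z. norm (x - z) \<le> e \<and> norm (T z) \<le> c * norm x"
    and c: "c \<ge> 0"
  shows "norm (T x) \<le> norm x * (2 * c)"
proof (cases "x = 0")
  case True
  then show ?thesis using linear_0[OF lin] by simp
next
  case False
  obtain z where sx: "(\<lambda>k. \<Sum>j<k. z j) \<longlonglongrightarrow> x" and nTz: "\<And>k. norm (T (z k)) \<le> c * norm x * (1/2) ^ k"
    using almost_bounded_series[OF approx c False] by auto
  have geom: "summable (\<lambda>k. c * norm x * (1/2::real) ^ k)"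
    by (intro summable_mult summable_geometric) simp
  have sn: "summable (\<lambda>k. norm (T (z k)))"
    by (rule summable_comparison_test[OF _ geom]) (use nTz in simp)
  define y where "y = (\<Sum>k. T (z k))"
  have "norm y \<le> (\<Sum>k. norm (T (z k)))" unfolding y_def by (rule summable_norm[OF sn])
  also have "\<dots> \<le> (\<Sum>k. c * norm x * (1/2::real) ^ k)"
    by (rule suminf_le[OF _ sn geom]) (use nTz in simp)
  also have "\<dots> = c * norm x * 2"
    using suminf_geometric[of "1/2::real"] by (simp add: suminf_mult)
  finally have ny: "norm y \<le> c * norm x * 2" .
  have "(\<lambda>k. T (\<Sum>j<k. z j)) \<longlonglongrightarrow> y"
    using summable_LIMSEQ[OF summable_norm_cancel[OF sn]] unfolding y_def
    by (simp add: linear_sum[OF lin])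
  with sx have "(\<lambda>k. ((\<Sum>j<k. z j), T (\<Sum>j<k. z j))) \<longlonglongrightarrow> (x, y)"
    by (rule tendsto_Pair)
  then have "(x, y) \<in> range (\<lambda>x. (x, T x))"
    by (rule closed_sequentially[OF cl, rotated]) (rule rangeI)
  then have "y = T x" by auto
  then show ?thesis using ny by (simp add: mult.commute mult.left_commute)
qed

theorem closed_graph_theorem:
  fixes T :: "'a::banach \<Rightarrow> 'b::banach"
  assumes lin: "linear T" and cl: "closed (range (\<lambda>x. (x, T x)))"
  shows "bounded_linear T"
proof -
  obtain c where c: "c \<ge> 0" and approx: "\<forall>x e. e > 0 \<longrightarrow> (\<exists>z. norm (x - z) \<le> e \<and> norm (T z) \<le> c * norm x)"
    using linear_almost_bounded[OF lin] by auto
  have "norm (T x) \<le> norm x * (2 * c)" for x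
    using approx by (intro almost_bounded_closed_graph_bound[OF lin cl _ c]) auto
  then show ?thesis
    using lin by (intro bounded_linear_intro[where K="2 * c"]) (simp_all add: linear_add linear_scale)
qed


lemma cscale_zero_left [simp]: "cscale 0 (x::'a::complex_vector) = 0"
  using scaleR_cscale[of 0 x] by simp

lemma cscale_zero_right [simp]: "cscale a (0::'a::complex_vector) = 0"
  by (metis cscale_zero_left cscale_cscale mult_zero_right)

lemma cscale_minus_left: "cscale (-a) (x::'a::complex_vector) = - cscale a x"
proof -
  have "cscale a x + cscale (-a) x = 0" using cscale_add_left[of a "-a" x, symmetric] by simp
  then show ?thesis by (metis add.commute add_eq_0_iff2 minus_unique)
qed

lemma cscale_minus_right: "cscale a (- (x::'a::complex_vector)) = - cscale a x"
proof -
  have "cscale a x + cscale a (-x) = 0" using cscale_add_right[of a x "-x", symmetric] by simp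
  then show ?thesis by (metis add.commute add_eq_0_iff2 minus_unique)
qed

lemma cscale_diff_left: "cscale (a - b) (x::'a::complex_vector) = cscale a x - cscale b x"
  by (metis diff_conv_add_uminus cscale_add_left cscale_minus_left)

lemma cscale_diff_right: "cscale a ((x::'a::complex_vector) - y) = cscale a x - cscale a y"
  by (metis diff_conv_add_uminus cscale_add_right cscale_minus_right)

lemma cscale_inverse: "l \<noteq> 0 \<Longrightarrow> cscale (inverse l) (cscale l (x::'a::complex_vector)) = x"
  by (simp add: cscale_cscale cscale_one)

lemma cscale_neg1: "cscale (-1) (x::'a::complex_vector) = - x"
  by (simp add: cscale_minus_left cscale_one)

lemma csubspace_diff: "csubspace D \<Longrightarrow> x \<in> D \<Longrightarrow> y \<in> D \<Longrightarrow> x - y \<in> D"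
  unfolding csubspace_def using cscale_neg1[of y] by (metis diff_conv_add_uminus)

lemma lin_op_subspace: "lin_op D f \<Longrightarrow> csubspace D"
  by (simp add: lin_op_def)

lemma lin_op_add: "lin_op D f \<Longrightarrow> x \<in> D \<Longrightarrow> y \<in> D \<Longrightarrow> f (x + y) = f x + f y"
  by (simp add: lin_op_def)

lemma lin_op_scale: "lin_op D f \<Longrightarrow> x \<in> D \<Longrightarrow> f (cscale c x) = cscale c (f x)"
  by (simp add: lin_op_def)

lemma lin_op_zero: "lin_op D f \<Longrightarrow> f 0 = 0"
  using lin_op_scale[of D f 0 0] lin_op_subspace[of D f] by (simp add: csubspace_def)

lemma lin_op_diff:
  assumes f: "lin_op D f" and "x \<in> D" "y \<in> D"
  shows "f (x - y) = f x - f y"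
proof -
  have "x - y \<in> D" using csubspace_diff[OF lin_op_subspace[OF f]] assms by blast
  then have "f x = f (x - y) + f y" using lin_op_add[OF f _ \<open>y \<in> D\<close>, of "x - y"] by simp
  then show ?thesis by simp
qed

lemma lin_op_prod:
  assumes A: "lin_op DA A" and B: "lin_op DB B"
  shows "lin_op (prod_dom DB DA A) (B \<circ> A)"
  using A B unfolding lin_op_def csubspace_def prod_dom_def by (auto simp: lin_op_zero[OF A])

lemma lin_op_shift:
  assumes "lin_op D S" "x \<in> D" "y \<in> D"
  shows "S (x + cscale k y) - cscale l (x + cscale k y) = (S x - cscale l x) + cscale k (S y - cscale l y)"
proof -
  have "cscale k y \<in> D" using lin_op_subspace[OF assms(1)] assms(3) by (simp add: csubspace_def)
  then have "S (x + cscale k y) = S x + cscale k (S y)"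
    using assms by (simp add: lin_op_add lin_op_scale)
  then show ?thesis
    by (simp add: cscale_add_right cscale_diff_right cscale_cscale mult.commute)
qed

lemma cbounded_linear_scale: "cbounded_linear f \<Longrightarrow> f (cscale c x) = cscale c (f x)"
  by (simp add: cbounded_linear_def)

lemma cbounded_linear_onorm: "cbounded_linear f \<Longrightarrow> norm (f x) \<le> onorm f * norm x"
  by (simp add: cbounded_linear_def onorm)

lemma cbounded_linear_onorm_max1: "cbounded_linear f \<Longrightarrow> norm (f x) \<le> max 1 (onorm f) * norm x"
  by (meson cbounded_linear_onorm max.cobounded2 mult_right_mono norm_ge_zero order_trans)

lemma cbounded_linear_onorm_nonneg: "cbounded_linear f \<Longrightarrow> 0 \<le> onorm f"
  by (simp add: cbounded_linear_def onorm_pos_le)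

lemma cbounded_linear_add: "cbounded_linear f \<Longrightarrow> cbounded_linear g \<Longrightarrow> cbounded_linear (\<lambda>x. f x + g x)"
  unfolding cbounded_linear_def by (auto intro: bounded_linear_add simp: cscale_add_right)

lemma cbounded_linear_compose: "cbounded_linear f \<Longrightarrow> cbounded_linear g \<Longrightarrow> cbounded_linear (\<lambda>x. f (g x))"
  unfolding cbounded_linear_def using bounded_linear_compose by auto

lemma cbounded_linear_ident: "cbounded_linear (\<lambda>x. x)"
  unfolding cbounded_linear_def by (simp add: bounded_linear_ident)

lemma cbounded_linear_cscale: "cbounded_linear (\<lambda>x::'a::complex_normed_vector. cscale k x)"
proof -
  have "bounded_linear (cscale k :: 'a \<Rightarrow> 'a)"
    by (rule bounded_linear_intro[where K="cmod k"])
       (simp_all add: cscale_add_right norm_cscale scaleR_cscale cscale_cscale mult.commute)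
  then show ?thesis unfolding cbounded_linear_def by (simp add: cscale_cscale mult.commute)
qed


section \<open>Resolvents\<close>

lemma resolventD:
  assumes "l \<in> resolvent_set D S"
  shows "resolvent D S l z \<in> D" "S (resolvent D S l z) - cscale l (resolvent D S l z) = z"
    "cbounded_linear (resolvent D S l)"
    "x \<in> D \<Longrightarrow> resolvent D S l (S x - cscale l x) = x"
proof -
  from assms obtain R where bij: "bij_betw (\<lambda>x. S x - cscale l x) D UNIV"
    and R: "cbounded_linear R" "\<And>z. R z \<in> D \<and> S (R z) - cscale l (R z) = z"
    unfolding resolvent_set_def by blast
  have inj: "inj_on (\<lambda>x. S x - cscale l x) D" using bij bij_betw_def by blast
  have eq: "resolvent D S l = R"
  proof
    fix z show "resolvent D S l z = R z"
      unfolding resolvent_def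
    proof (rule the_equality)
      show "R z \<in> D \<and> S (R z) - cscale l (R z) = z" using R by blast
      fix x assume "x \<in> D \<and> S x - cscale l x = z"
      then show "x = R z" using R(2)[of z] inj unfolding inj_on_def by metis
    qed
  qed
  show "resolvent D S l z \<in> D" "S (resolvent D S l z) - cscale l (resolvent D S l z) = z"
    "cbounded_linear (resolvent D S l)" using R eq by auto
  show "x \<in> D \<Longrightarrow> resolvent D S l (S x - cscale l x) = x"
    using R(2)[of "S x - cscale l x"] inj unfolding eq inj_on_def by metis
qed

lemma resolvent_setI:
  assumes lin: "lin_op D S" and R: "cbounded_linear R" "\<And>z. R z \<in> D \<and> S (R z) - cscale l (R z) = z"
    and ker: "\<And>x. x \<in> D \<Longrightarrow> S x - cscale l x = 0 \<Longrightarrow> x = 0"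
  shows "l \<in> resolvent_set D S" "resolvent D S l = R"
proof -
  have "inj_on (\<lambda>x. S x - cscale l x) D"
  proof (rule inj_onI)
    fix x y assume xy: "x \<in> D" "y \<in> D" "S x - cscale l x = S y - cscale l y"
    have "S (x - y) - cscale l (x - y) = (S x - cscale l x) - (S y - cscale l y)"
      using lin xy(1,2) by (simp add: lin_op_diff cscale_diff_right algebra_simps)
    then have "S (x - y) - cscale l (x - y) = 0"
      using xy(3) by simp
    then have "x - y = 0" using ker csubspace_diff[OF lin_op_subspace[OF lin] xy(1,2)] by blast
    then show "x = y" by simp
  qed
  moreover have "z \<in> (\<lambda>x. S x - cscale l x) ` D" for z
  proof (rule image_eqI)
    show "z = S (R z) - cscale l (R z)" "R z \<in> D" using R(2)[of z] by auto
  qed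
  ultimately have "bij_betw (\<lambda>x. S x - cscale l x) D UNIV"
    unfolding bij_betw_def by blast
  then show l: "l \<in> resolvent_set D S" unfolding resolvent_set_def using R by blast
  show "resolvent D S l = R"
  proof
    fix z show "resolvent D S l z = R z"
      using resolventD(4)[OF l, of "R z"] R(2)[of z] by simp
  qed
qed

lemma resolvent_identity:
  assumes l0: "l0 \<in> resolvent_set D S" and l: "l \<in> resolvent_set D S"
  shows "resolvent D S l y = resolvent D S l0 (y + cscale (l - l0) (resolvent D S l y))"
proof -
  define w where "w = resolvent D S l y"
  have w: "w \<in> D" "S w - cscale l w = y" using resolventD(1,2)[OF l] w_def by auto
  have "S w - cscale l0 w = y + cscale (l - l0) w"
    using w(2) by (simp add: cscale_diff_left algebra_simps)
  then show ?thesis using resolventD(4)[OF l0 w(1)] w_def by simp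
qed


section \<open>Closed operators composed with bounded operators\<close>

lemma closed_op_compose_closed_graph:
  fixes A :: "'x::complex_normed_vector \<Rightarrow> 'y::complex_normed_vector" and R :: "'z::real_normed_vector \<Rightarrow> 'x"
  assumes cl: "closed_op DA A" and R: "continuous_on UNIV R" and RD: "\<And>z. R z \<in> DA"
  shows "closed (range (\<lambda>z. (z, A (R z))))"
  unfolding closed_sequential_limits
proof (intro allI impI, elim conjE)
  fix s p assume s: "\<forall>n. s n \<in> range (\<lambda>z. (z, A (R z)))" and lim: "s \<longlonglongrightarrow> p"
  obtain z y where p: "p = (z, y)" by (cases p)
  have "isCont R z" using R by (simp add: continuous_on_eq_continuous_at)
  then have "(\<lambda>n. R (fst (s n))) \<longlonglongrightarrow> R z"
    by (rule isCont_tendsto_compose) (use tendsto_fst[OF lim] p in simp)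
  moreover have "(\<lambda>n. snd (s n)) \<longlonglongrightarrow> y" using tendsto_snd[OF lim] p by simp
  ultimately have "(\<lambda>n. (R (fst (s n)), snd (s n))) \<longlonglongrightarrow> (R z, y)" by (rule tendsto_Pair)
  then have "(R z, y) \<in> graph DA A"
  proof (rule closed_sequentially[OF cl[unfolded closed_op_def], rotated])
    fix n
    obtain w where "s n = (w, A (R w))" using s by blast
    then show "(R (fst (s n)), snd (s n)) \<in> graph DA A" using RD[of w] unfolding graph_def by auto
  qed
  then show "p \<in> range (\<lambda>z. (z, A (R z)))" using p unfolding graph_def by auto
qed

lemma closed_op_compose_bounded:
  fixes DA :: "'x::cbanach set" and A :: "'x \<Rightarrow> 'y::cbanach" and R :: "'z::cbanach \<Rightarrow> 'x"
  assumes lin: "lin_op DA A" and cl: "closed_op DA A" and R: "cbounded_linear R" and RD: "\<And>z. R z \<in> DA"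
  shows "cbounded_linear (\<lambda>z. A (R z))"
proof -
  have scale: "A (R (cscale c z)) = cscale c (A (R z))" for c z
    using lin_op_scale[OF lin RD] cbounded_linear_scale[OF R] by simp
  have "linear (\<lambda>z. A (R z))"
  proof
    show "A (R (x + y)) = A (R x) + A (R y)" for x y
      using lin_op_add[OF lin RD RD] R by (simp add: cbounded_linear_def linear_add bounded_linear.linear)
    show "A (R (r *\<^sub>R x)) = r *\<^sub>R A (R x)" for r x
      using scale[of "complex_of_real r" x] by (simp add: scaleR_cscale)
  qed
  moreover have "continuous_on UNIV R"
    using R by (simp add: cbounded_linear_def linear_continuous_on)
  ultimately have "bounded_linear (\<lambda>z. A (R z))"
    by (intro closed_graph_theorem closed_op_compose_closed_graph[OF cl _ RD])
  then show ?thesis unfolding cbounded_linear_def using scale by simp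
qed

(* With Q closed on a space containing dom S, the operators Q R(l) are bounded, with norms
   growing at most linearly in |l| times max 1 (norm R(l)); the constant depends only on a base
   point l0 of the resolvent set, via the resolvent identity. *)
lemma closed_op_resolvent_bound:
  fixes Q :: "'x::cbanach \<Rightarrow> 'y::cbanach"
  assumes Q: "lin_op DQ Q" "closed_op DQ Q" and D: "D \<subseteq> DQ" and l0: "l0 \<in> resolvent_set D S"
  obtains K where "K \<ge> 0" "\<And>l y. l \<in> resolvent_set D S \<Longrightarrow>
      norm (Q (resolvent D S l y)) \<le> K * (2 + cmod l) * max 1 (onorm (resolvent D S l)) * norm y"
proof -
  define P where "P y = Q (resolvent D S l0 y)" for y
  have P: "cbounded_linear P"
    unfolding P_def[abs_def] using resolventD(1,3)[OF l0] D by (intro closed_op_compose_bounded[OF Q]) auto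
  define K where "K = onorm P * (1 + cmod l0)"
  have "norm (Q (resolvent D S l y)) \<le> K * (2 + cmod l) * max 1 (onorm (resolvent D S l)) * norm y"
    if l: "l \<in> resolvent_set D S" for l y
  proof -
    define M where "M = max 1 (onorm (resolvent D S l))"
    define w where "w = resolvent D S l y"
    have M: "M \<ge> 1" by (simp add: M_def)
    have nw: "norm w \<le> M * norm y"
      unfolding w_def M_def by (rule cbounded_linear_onorm_max1[OF resolventD(3)[OF l]])
    have "Q w = P (y + cscale (l - l0) w)"
      using resolvent_identity[OF l0 l, of y] unfolding P_def w_def by metis
    then have "norm (Q w) \<le> onorm P * norm (y + cscale (l - l0) w)"
      using cbounded_linear_onorm[OF P] by simp
    also have "norm (y + cscale (l - l0) w) \<le> norm y + cmod (l - l0) * (M * norm y)"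
      using norm_triangle_ineq[of y "cscale (l - l0) w"] nw
      by (simp add: norm_cscale) (meson add_left_mono mult_left_mono norm_ge_zero order_trans)
    also have "\<dots> = (1 + cmod (l - l0) * M) * norm y" by (simp add: algebra_simps)
    also have "1 + cmod (l - l0) * M \<le> (1 + cmod l0) * (2 + cmod l) * M"
    proof -
      have "1 + cmod (l - l0) * M \<le> 1 + (cmod l + cmod l0) * M"
        using M norm_triangle_ineq4[of l l0] by (simp add: mult_right_mono)
      also have "\<dots> \<le> (1 + cmod l0) * (2 + cmod l) * M"
        using M by (simp add: algebra_simps) (smt (verit) mult_nonneg_nonneg norm_ge_zero mult_left_mono)
      finally show ?thesis .
    qed
    finally show ?thesis
      using cbounded_linear_onorm_nonneg[OF P]
      by (simp add: K_def M_def w_def mult_left_mono mult_right_mono algebra_simps)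
  qed
  moreover have "K \<ge> 0" using cbounded_linear_onorm_nonneg[OF P] by (simp add: K_def)
  ultimately show ?thesis using that by blast
qed


section \<open>Closure of an operator agreeing with a continuous map on a dense set\<close>

lemma closure_graph_dense_continuous:
  fixes f g :: "'a::complex_normed_vector \<Rightarrow> 'b::complex_normed_vector"
  assumes g: "continuous_on UNIV g" and dense: "densely_defined D" and fg: "\<And>x. x \<in> D \<Longrightarrow> f x = g x"
  shows "closable D f" "cl_dom D f = UNIV" "cl_fun D f x = g x"
proof -
  have gr: "graph D f = (\<lambda>x. (x, g x)) ` D" unfolding graph_def using fg by auto
  have cl: "closure (graph D f) = range (\<lambda>x. (x, g x))"
  proof
    show "closure (graph D f) \<subseteq> range (\<lambda>x. (x, g x))"
      by (rule closure_minimal) (auto simp: gr intro: continuous_closed_graph[OF closed_UNIV g])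
    have "(\<lambda>x. (x, g x)) ` closure D \<subseteq> closure (graph D f)"
      by (rule image_closure_subset) (auto simp: gr intro!: continuous_on_Pair continuous_on_id
          continuous_on_subset[OF g] closure_subset[THEN subsetD])
    then show "range (\<lambda>x. (x, g x)) \<subseteq> closure (graph D f)"
      using dense by (simp add: densely_defined_def)
  qed
  show "closable D f" unfolding closable_def cl is_graph_def by auto
  show "cl_dom D f = UNIV" unfolding cl_dom_def cl by force
  show "cl_fun D f x = g x" unfolding cl_fun_def cl by (rule the_equality) auto
qed


section \<open>The products AB and BA\<close>

(* Closed operators A : dom A in X -> Y and B : dom B in Y -> X.  DAB, DBA are the natural
   domains of AB and BA, and RAB l, RBA l their resolvents R(l), S(l). *)
locale closed_operator_pair =
  fixes DA :: "'x::cbanach set" and A :: "'x \<Rightarrow> 'y::cbanach"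
    and DB :: "'y set" and B :: "'y \<Rightarrow> 'x"
  assumes A_lin: "lin_op DA A" and A_closed: "closed_op DA A"
    and B_lin: "lin_op DB B" and B_closed: "closed_op DB B"
begin

abbreviation "DAB \<equiv> prod_dom DA DB B"
abbreviation "DBA \<equiv> prod_dom DB DA A"
abbreviation "RAB \<equiv> resolvent DAB (A \<circ> B)"
abbreviation "RBA \<equiv> resolvent DBA (B \<circ> A)"

lemma BA_lin: "lin_op DBA (B \<circ> A)"
  by (rule lin_op_prod[OF A_lin B_lin])

lemma B_res_A_shift:
  assumes l: "l \<in> resolvent_set DAB (A \<circ> B)" and u: "u \<in> DA"
  defines "z \<equiv> B (RAB l (A u)) - u"
  shows "z \<in> DBA" "(B \<circ> A) z - cscale l z = cscale l u"
proof -
  define v where "v = RAB l (A u)"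
  have v: "v \<in> DB" "B v \<in> DA" "A (B v) - cscale l v = A u"
    using resolventD(1,2)[OF l, of "A u"] unfolding v_def prod_dom_def by auto
  have zA: "z \<in> DA" using csubspace_diff[OF lin_op_subspace[OF A_lin] v(2) u] by (simp add: z_def v_def)
  have Az: "A z = cscale l v"
    using v(3) lin_op_diff[OF A_lin v(2) u] by (simp add: z_def v_def algebra_simps)
  show "z \<in> DBA"
    using zA Az lin_op_subspace[OF B_lin] v(1) by (simp add: prod_dom_def csubspace_def)
  have "(B \<circ> A) z - cscale l z = cscale l (B v) - cscale l (B v - u)"
    using Az lin_op_scale[OF B_lin v(1)] by (simp add: z_def v_def)
  then show "(B \<circ> A) z - cscale l z = cscale l u"
    by (simp add: cscale_diff_right)
qed

lemma BA_injective:
  assumes l: "l \<in> resolvent_set DAB (A \<circ> B)" "l \<noteq> 0"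
    and x: "x \<in> DBA" "(B \<circ> A) x - cscale l x = 0"
  shows "x = 0"
proof -
  have xA: "x \<in> DA" "A x \<in> DB" "B (A x) = cscale l x" using x by (auto simp: prod_dom_def)
  then have "A x \<in> DAB" using lin_op_subspace[OF A_lin] by (simp add: prod_dom_def csubspace_def)
  moreover have "(A \<circ> B) (A x) - cscale l (A x) = 0" using xA lin_op_scale[OF A_lin xA(1)] by simp
  ultimately have "A x = RAB l 0" using resolventD(4)[OF l(1)] by metis
  then have "A x = 0"
    using resolventD(3)[OF l(1)] by (simp add: cbounded_linear_def linear_0 bounded_linear.linear)
  then have "cscale l x = 0" using xA lin_op_zero[OF B_lin] by simp
  then show "x = 0" using cscale_inverse[OF l(2), of x] by simp
qed

(* For l in rho(AB) - {0} and m in rho(BA), T = l^{-1} (m S(m) + (l - m) B R(l) A S(m)) is a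
   right inverse of BA - l: writing u = S(m) x and z = B R(l) A u - u, one has
   T x = u + ((l - m)/l) z, and (BA - l) u = x + (m - l) u, (BA - l) z = l u. *)
lemma BA_right_inverse:
  assumes m: "m \<in> resolvent_set DBA (B \<circ> A)"
    and l: "l \<in> resolvent_set DAB (A \<circ> B)" "l \<noteq> 0"
  defines "T \<equiv> \<lambda>x. cscale (inverse l) (cscale m (RBA m x) + cscale (l - m) (B (RAB l (A (RBA m x)))))"
  shows "T x \<in> DBA" "(B \<circ> A) (T x) - cscale l (T x) = x"
proof -
  define u where "u = RBA m x"
  define z where "z = B (RAB l (A u)) - u"
  define k where "k = (l - m) / l"
  have u: "u \<in> DBA" "u \<in> DA" "(B \<circ> A) u - cscale m u = x"
    using resolventD(1,2)[OF m, of x] by (auto simp: u_def prod_dom_def)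
  have z: "z \<in> DBA" "(B \<circ> A) z - cscale l z = cscale l u"
    using B_res_A_shift[OF l(1) u(2)] by (simp_all add: z_def)
  have Tx: "T x = u + cscale k z"
  proof -
    have "T x = cscale (inverse l) (cscale m u + cscale (l - m) (z + u))"
      by (simp add: T_def u_def z_def)
    also have "\<dots> = cscale (inverse l) (cscale l u + cscale (l - m) z)"
      by (simp add: cscale_add_right cscale_diff_left algebra_simps)
    also have "\<dots> = u + cscale k z"
      using l(2) by (simp add: cscale_add_right cscale_cscale k_def field_simps cscale_one)
    finally show ?thesis .
  qed
  show "T x \<in> DBA"
    using Tx u(1) z(1) lin_op_subspace[OF BA_lin] by (simp add: csubspace_def)
  have "(B \<circ> A) (T x) - cscale l (T x) = ((B \<circ> A) u - cscale l u) + cscale k (cscale l u)"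
    unfolding Tx lin_op_shift[OF BA_lin u(1) z(1)] z(2) ..
  also have "cscale k (cscale l u) = cscale (l - m) u"
    using l(2) by (simp add: cscale_cscale k_def)
  also have "((B \<circ> A) u - cscale l u) + cscale (l - m) u = (B \<circ> A) u - cscale m u"
    by (simp add: cscale_diff_left)
  also have "\<dots> = x" by (rule u(3))
  finally show "(B \<circ> A) (T x) - cscale l (T x) = x" .
qed

(* Hence l is in rho(BA) with S(l) = T, T being bounded as B R(l) and A S(m) are. *)
lemma BA_resolvent_formula:
  assumes m: "m \<in> resolvent_set DBA (B \<circ> A)"
    and l: "l \<in> resolvent_set DAB (A \<circ> B)" "l \<noteq> 0"
  defines "T \<equiv> \<lambda>x. cscale (inverse l) (cscale m (RBA m x) + cscale (l - m) (B (RAB l (A (RBA m x)))))"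
  shows "l \<in> resolvent_set DBA (B \<circ> A)" "RBA l = T"
proof -
  have ASm: "cbounded_linear (\<lambda>x. A (RBA m x))"
    using resolventD(1,3)[OF m] by (intro closed_op_compose_bounded[OF A_lin A_closed]) (auto simp: prod_dom_def)
  have BRl: "cbounded_linear (\<lambda>y. B (RAB l y))"
    using resolventD(1,3)[OF l(1)] by (intro closed_op_compose_bounded[OF B_lin B_closed]) (auto simp: prod_dom_def)
  have "cbounded_linear T"
    unfolding T_def
    by (intro cbounded_linear_compose[OF cbounded_linear_cscale] cbounded_linear_add
        cbounded_linear_compose[OF BRl ASm] resolventD(3)[OF m])
  moreover have "T x \<in> DBA \<and> (B \<circ> A) (T x) - cscale l (T x) = x" for x
    using BA_right_inverse[OF m l] unfolding T_def by blast
  ultimately show "l \<in> resolvent_set DBA (B \<circ> A)" "RBA l = T"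
    using resolvent_setI[OF BA_lin] BA_injective[OF l] by blast+
qed

(* On dom A, B R(l) A = I + l S(l); in particular it extends to a bounded operator. *)
lemma B_res_A_eq:
  assumes l: "l \<in> resolvent_set DAB (A \<circ> B)" "l \<in> resolvent_set DBA (B \<circ> A)" and x: "x \<in> DA"
  shows "B (RAB l (A x)) = x + cscale l (RBA l x)"
proof -
  define z where "z = B (RAB l (A x)) - x"
  have "z = RBA l (cscale l x)"
    using B_res_A_shift[OF l(1) x] resolventD(4)[OF l(2)] by (metis z_def)
  then show ?thesis
    using cbounded_linear_scale[OF resolventD(3)[OF l(2)]] by (simp add: z_def algebra_simps)
qed

lemma B_res_A_closure:
  assumes dense: "densely_defined DA"
    and l: "l \<in> resolvent_set DAB (A \<circ> B)" "l \<in> resolvent_set DBA (B \<circ> A)" "l \<noteq> 0"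
  shows "closable DA (\<lambda>x. B (RAB l (A x)))"
    "cl_dom DA (\<lambda>x. B (RAB l (A x))) = UNIV"
    "RBA l x = cscale (inverse l) (cl_fun DA (\<lambda>x. B (RAB l (A x))) x - x)"
proof -
  define g where "g x = x + cscale l (RBA l x)" for x
  have "continuous_on UNIV g"
    using cbounded_linear_add[OF cbounded_linear_ident
        cbounded_linear_compose[OF cbounded_linear_cscale resolventD(3)[OF l(2)]]]
    unfolding g_def by (simp add: cbounded_linear_def linear_continuous_on)
  note closure = closure_graph_dense_continuous[OF this dense, of "\<lambda>x. B (RAB l (A x))"]
  show "closable DA (\<lambda>x. B (RAB l (A x)))" "cl_dom DA (\<lambda>x. B (RAB l (A x))) = UNIV"
    using closure B_res_A_eq[OF l(1,2)] g_def by auto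
  show "RBA l x = cscale (inverse l) (cl_fun DA (\<lambda>x. B (RAB l (A x))) x - x)"
  proof -
    have "cl_fun DA (\<lambda>x. B (RAB l (A x))) x - x = cscale l (RBA l x)"
      using closure(3)[of x] B_res_A_eq[OF l(1,2)] by (simp add: g_def)
    then show ?thesis using cscale_inverse[OF l(3), of "RBA l x"] by simp
  qed
qed

lemma resolvent_estimate_arith:
  fixes a d L n X Z C KB KA M1 M2 p q :: real
  assumes "0 \<le> a" "0 \<le> d" "0 < L" "0 \<le> n" "1 \<le> C" "KB * KA \<le> C" "1 \<le> M1" "1 \<le> M2" "0 \<le> p" "0 \<le> q"
    and X: "X \<le> M2 * n" and Z: "Z \<le> KB * p * M1 * (KA * q * M2 * n)"
  shows "(a * X + d * Z) / L \<le> C * M1 * M2 / L * (a + d * p * q) * n"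
proof -
  define N where "N = C * M1 * M2 * n"
  have "1 * 1 * M2 * n \<le> C * M1 * M2 * n"
    using assms by (intro mult_right_mono mult_mono) auto
  then have "X \<le> N" using X by (simp add: N_def)
  moreover have "Z \<le> p * q * N"
  proof -
    have "Z \<le> (KB * KA) * (p * q * M1 * M2 * n)" using Z by (simp add: algebra_simps)
    also have "\<dots> \<le> C * (p * q * M1 * M2 * n)" using assms by (intro mult_right_mono) auto
    finally show ?thesis by (simp add: N_def algebra_simps)
  qed
  ultimately have "a * X + d * Z \<le> a * N + d * (p * q * N)"
    using assms by (intro add_mono mult_left_mono) auto
  then show ?thesis
    using assms by (simp add: N_def divide_right_mono algebra_simps)
qed

lemma BA_resolvent_bound:
  assumes l: "l \<in> resolvent_set DAB (A \<circ> B)" "l \<noteq> 0" and m: "m \<in> resolvent_set DBA (B \<circ> A)"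
    and KB: "KB \<ge> 0" "\<And>y. norm (B (RAB l y)) \<le> KB * (2 + cmod l) * max 1 (onorm (RAB l)) * norm y"
    and KA: "\<And>x. norm (A (RBA m x)) \<le> KA * (2 + cmod m) * max 1 (onorm (RBA m)) * norm x"
    and C: "1 \<le> C" "KB * KA \<le> C"
  shows "onorm (RBA l) \<le> C * max 1 (onorm (RAB l)) * max 1 (onorm (RBA m)) / cmod l
        * (cmod m + cmod (l - m) * (2 + cmod l) * (2 + cmod m))"
proof (rule onorm_bound)
  show "0 \<le> C * max 1 (onorm (RAB l)) * max 1 (onorm (RBA m)) / cmod l
      * (cmod m + cmod (l - m) * (2 + cmod l) * (2 + cmod m))"
    using C by simp
  fix x
  define u where "u = RBA m x"
  have "norm (RBA l x) = norm (cscale m u + cscale (l - m) (B (RAB l (A u)))) / cmod l"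
    using BA_resolvent_formula(2)[OF m l] by (simp add: u_def norm_cscale norm_inverse divide_inverse)
  also have "\<dots> \<le> (cmod m * norm u + cmod (l - m) * norm (B (RAB l (A u)))) / cmod l"
    using norm_triangle_ineq[of "cscale m u" "cscale (l - m) (B (RAB l (A u)))"]
    by (intro divide_right_mono) (simp_all add: norm_cscale)
  also have "\<dots> \<le> C * max 1 (onorm (RAB l)) * max 1 (onorm (RBA m)) / cmod l
      * (cmod m + cmod (l - m) * (2 + cmod l) * (2 + cmod m)) * norm x"
  proof (rule resolvent_estimate_arith)
    show "norm u \<le> max 1 (onorm (RBA m)) * norm x"
      unfolding u_def by (rule cbounded_linear_onorm_max1[OF resolventD(3)[OF m]])
    have "norm (B (RAB l (A u))) \<le> KB * (2 + cmod l) * max 1 (onorm (RAB l)) * norm (A u)"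
      by (rule KB(2))
    also have "\<dots> \<le> KB * (2 + cmod l) * max 1 (onorm (RAB l))
                   * (KA * (2 + cmod m) * max 1 (onorm (RBA m)) * norm x)"
      using KB(1) KA[of x] by (intro mult_left_mono) (auto simp: u_def)
    finally show "norm (B (RAB l (A u))) \<le> KB * (2 + cmod l) * max 1 (onorm (RAB l))
                   * (KA * (2 + cmod m) * max 1 (onorm (RBA m)) * norm x)" .
  qed (use l(2) C in auto)
  finally show "norm (RBA l x) \<le> C * max 1 (onorm (RAB l)) * max 1 (onorm (RBA m)) / cmod l
      * (cmod m + cmod (l - m) * (2 + cmod l) * (2 + cmod m)) * norm x" .
qed

lemma BA_resolvent_estimate:
  assumes l0: "l0 \<in> resolvent_set DAB (A \<circ> B)" and m0: "m0 \<in> resolvent_set DBA (B \<circ> A)"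
  shows "\<exists>C>0. \<forall>l \<in> resolvent_set DAB (A \<circ> B) - {0}. \<forall>m \<in> resolvent_set DBA (B \<circ> A).
      onorm (RBA l) \<le> C * max 1 (onorm (RAB l)) * max 1 (onorm (RBA m)) / cmod l
        * (cmod m + cmod (l - m) * (2 + cmod l) * (2 + cmod m))"
proof -
  obtain KB where KB: "KB \<ge> 0" "\<And>l y. l \<in> resolvent_set DAB (A \<circ> B) \<Longrightarrow>
      norm (B (RAB l y)) \<le> KB * (2 + cmod l) * max 1 (onorm (RAB l)) * norm y"
    by (rule closed_op_resolvent_bound[OF B_lin B_closed _ l0]) (auto simp: prod_dom_def)
  obtain KA where KA: "\<And>m x. m \<in> resolvent_set DBA (B \<circ> A) \<Longrightarrow>
      norm (A (RBA m x)) \<le> KA * (2 + cmod m) * max 1 (onorm (RBA m)) * norm x"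
    by (rule closed_op_resolvent_bound[OF A_lin A_closed _ m0]) (auto simp: prod_dom_def)
  show ?thesis
  proof (intro exI[of _ "max 1 (KB * KA)"] conjI ballI)
    fix l m assume l: "l \<in> resolvent_set DAB (A \<circ> B) - {0}" and m: "m \<in> resolvent_set DBA (B \<circ> A)"
    show "onorm (RBA l) \<le> max 1 (KB * KA) * max 1 (onorm (RAB l)) * max 1 (onorm (RBA m)) / cmod l
        * (cmod m + cmod (l - m) * (2 + cmod l) * (2 + cmod m))"
      by (rule BA_resolvent_bound[where KB = KB and KA = KA]) (use l m KB KA in auto)
  qed simp
qed

end


theorem theorem1p3:
  fixes DA :: "'x::cbanach set" and A :: "'x \<Rightarrow> 'y::cbanach"
    and DB :: "'y set" and B :: "'y \<Rightarrow> 'x"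
  assumes A_lin: "lin_op DA A" and A_closed: "closed_op DA A" and A_dense: "densely_defined DA"
    and B_lin: "lin_op DB B" and B_closed: "closed_op DB B" and B_dense: "densely_defined DB"
    and AB_res: "resolvent_set (prod_dom DA DB B) (A \<circ> B) \<noteq> {}"
    and BA_res: "resolvent_set (prod_dom DB DA A) (B \<circ> A) \<noteq> {}"
  shows "(spectrum_op (prod_dom DA DB B) (A \<circ> B) - {0} = spectrum_op (prod_dom DB DA A) (B \<circ> A) - {0})
    \<and> (\<forall>l \<in> resolvent_set (prod_dom DA DB B) (A \<circ> B) - {0}.
           closable DA (\<lambda>x. B (resolvent (prod_dom DA DB B) (A \<circ> B) l (A x)))
         \<and> cl_dom DA (\<lambda>x. B (resolvent (prod_dom DA DB B) (A \<circ> B) l (A x))) = UNIV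
         \<and> (\<forall>x. resolvent (prod_dom DB DA A) (B \<circ> A) l x =
                cscale (inverse l) (cl_fun DA (\<lambda>x. B (resolvent (prod_dom DA DB B) (A \<circ> B) l (A x))) x - x)))
    \<and> (\<forall>l \<in> resolvent_set (prod_dom DA DB B) (A \<circ> B) - {0}. \<forall>m \<in> resolvent_set (prod_dom DB DA A) (B \<circ> A).
           \<forall>x. resolvent (prod_dom DB DA A) (B \<circ> A) l x =
             cscale (inverse l)
               (cscale m (resolvent (prod_dom DB DA A) (B \<circ> A) m x)
                + cscale (l - m) (B (resolvent (prod_dom DA DB B) (A \<circ> B) l
                                      (A (resolvent (prod_dom DB DA A) (B \<circ> A) m x))))))
    \<and> (\<exists>C>0. \<forall>l \<in> resolvent_set (prod_dom DB DA A) (B \<circ> A). \<forall>m \<in> resolvent_set (prod_dom DB DA A) (B \<circ> A).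
           l \<noteq> 0 \<longrightarrow>
           onorm (resolvent (prod_dom DB DA A) (B \<circ> A) l)
             \<le> C * max 1 (onorm (resolvent (prod_dom DA DB B) (A \<circ> B) l))
                 * max 1 (onorm (resolvent (prod_dom DB DA A) (B \<circ> A) m)) / cmod l
                 * (cmod m + cmod (l - m) * (2 + cmod l) * (2 + cmod m)))"
proof -
  interpret AB: closed_operator_pair DA A DB B by unfold_locales (fact A_lin A_closed B_lin B_closed)+
  interpret BA: closed_operator_pair DB B DA A by unfold_locales (fact B_lin B_closed A_lin A_closed)+
  obtain l0 where l0: "l0 \<in> resolvent_set AB.DAB (A \<circ> B)" using AB_res by blast
  obtain m0 where m0: "m0 \<in> resolvent_set AB.DBA (B \<circ> A)" using BA_res by blast
  have same_resolvent: "l \<in> resolvent_set AB.DAB (A \<circ> B) \<longleftrightarrow> l \<in> resolvent_set AB.DBA (B \<circ> A)" if "l \<noteq> 0" for l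
    using AB.BA_resolvent_formula(1)[OF m0 _ that] BA.BA_resolvent_formula(1)[OF l0 _ that] by blast
  have spectra: "spectrum_op AB.DAB (A \<circ> B) - {0} = spectrum_op AB.DBA (B \<circ> A) - {0}"
    unfolding spectrum_op_def using same_resolvent by blast
  have closure: "closable DA (\<lambda>x. B (AB.RAB l (A x))) \<and> cl_dom DA (\<lambda>x. B (AB.RAB l (A x))) = UNIV
      \<and> (\<forall>x. AB.RBA l x = cscale (inverse l) (cl_fun DA (\<lambda>x. B (AB.RAB l (A x))) x - x))"
    if "l \<in> resolvent_set AB.DAB (A \<circ> B) - {0}" for l
    using AB.B_res_A_closure[OF A_dense, of l] same_resolvent that by blast
  have formula: "AB.RBA l x = cscale (inverse l) (cscale m (AB.RBA m x)
      + cscale (l - m) (B (AB.RAB l (A (AB.RBA m x)))))"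
    if "l \<in> resolvent_set AB.DAB (A \<circ> B) - {0}" "m \<in> resolvent_set AB.DBA (B \<circ> A)" for l m x
    using AB.BA_resolvent_formula(2)[of m l] that by simp
  obtain C where "C > 0" and estimate: "\<forall>l \<in> resolvent_set AB.DAB (A \<circ> B) - {0}. \<forall>m \<in> resolvent_set AB.DBA (B \<circ> A).
      onorm (AB.RBA l) \<le> C * max 1 (onorm (AB.RAB l)) * max 1 (onorm (AB.RBA m)) / cmod l
        * (cmod m + cmod (l - m) * (2 + cmod l) * (2 + cmod m))"
    using AB.BA_resolvent_estimate[OF l0 m0] by blast
  have "\<forall>l \<in> resolvent_set AB.DBA (B \<circ> A). \<forall>m \<in> resolvent_set AB.DBA (B \<circ> A). l \<noteq> 0 \<longrightarrow>
      onorm (AB.RBA l) \<le> C * max 1 (onorm (AB.RAB l)) * max 1 (onorm (AB.RBA m)) / cmod l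
        * (cmod m + cmod (l - m) * (2 + cmod l) * (2 + cmod m))"
    using estimate same_resolvent by blast
  with spectra closure formula \<open>C > 0\<close> show ?thesis
    by (intro conjI ballI allI exI[of _ C]) auto
qed

end
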